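(* Let $\xi=(\tau_L,\delta_L,\tau_R,\delta_R)\in\Phi$ and suppose $J_2(\xi)<1$. Then the set $\Xi=\left\{(x,y)\in\mathbb{R}^2: \|f_\xi^{-i}(x,y)\|\to\infty \text{ as } i\to\infty\right\}$ is dense in $\mathbb{R}^2$.
   Context: For $\xi=(\tau_L,\delta_L,\tau_R,\delta_R)\in\mathbb{R}^4$ define $f_\xi(x,y)=(\tau_L x+y+1,\,-\delta_L x)$ if $x\le 0$ and $f_\xi(x,y)=(\tau_R x+y+1,\,-\delta_R x)$ if $x\ge 0$. Let $\Phi=\{\xi: \tau_L>\delta_L+1,\ \delta_L>0,\ \tau_R<-(\delta_R+1),\ \delta_R>0\}$; for $\xi\in\Phi$, $f_\xi$ is a homeomorphism, $\begin{bmatrix}\tau_L&1\\-\delta_L&0\end{bmatrix}$ has real eigenvalues $0<\lambda_L^s<1<\lambda_L^u$ and $\begin{bmatrix}\tau_R&1\\-\delta_R&0\end{bmatrix}$ has real eigenvalues $\lambda_R^u<-1<\lambda_R^s<0$. Let $J_2(\xi)=\max\left\{\lambda_L^s,\frac{\sqrt2\,\lambda_L^s}{\lambda_L^s+1}\right\}+\max\left\{|\lambda_R^s|,\frac{\sqrt2\,|\lambda_R^s|}{|\lambda_R^s|+1}\right\}$. $\|\cdot\|$ is the Euclidean norm. *)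

theory Defs
  imports "HOL-Analysis.Analysis"
begin

text \<open>Parameters xi = (tauL, deltaL, tauR, deltaR). Points of R^2 are real pairs
  (the norm on real \<times> real is the Euclidean norm).\<close>

definition bcnf :: "real \<times> real \<times> real \<times> real \<Rightarrow> real \<times> real \<Rightarrow> real \<times> real" where
  "bcnf xi p = (case xi of (tL, dL, tR, dR) \<Rightarrow> case p of (x, y) \<Rightarrow>
     (if x \<le> 0 then (tL * x + y + 1, - dL * x) else (tR * x + y + 1, - dR * x)))"

definition Phi :: "(real \<times> real \<times> real \<times> real) set" where
  "Phi = {(tL, dL, tR, dR). tL > dL + 1 \<and> dL > 0 \<and> tR < - (dR + 1) \<and> dR > 0}"

text \<open>Eigenvalues of [[tau,1],[-delta,0]] are the roots of l^2 - tau l + delta.\<close>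
definition lamLs :: "real \<times> real \<times> real \<times> real \<Rightarrow> real" where
  "lamLs xi = (case xi of (tL, dL, tR, dR) \<Rightarrow>
     THE l. l^2 - tL * l + dL = 0 \<and> 0 < l \<and> l < 1)"

definition lamRs :: "real \<times> real \<times> real \<times> real \<Rightarrow> real" where
  "lamRs xi = (case xi of (tL, dL, tR, dR) \<Rightarrow>
     THE l. l^2 - tR * l + dR = 0 \<and> -1 < l \<and> l < 0)"

definition J2 :: "real \<times> real \<times> real \<times> real \<Rightarrow> real" where
  "J2 xi = max (lamLs xi) (sqrt 2 * lamLs xi / (lamLs xi + 1))
         + max \<bar>lamRs xi\<bar> (sqrt 2 * \<bar>lamRs xi\<bar> / (\<bar>lamRs xi\<bar> + 1))"

definition bcnf_inv_iter :: "real \<times> real \<times> real \<times> real \<Rightarrow> nat \<Rightarrow> real \<times> real \<Rightarrow> real \<times> real" where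
  "bcnf_inv_iter xi i = (inv (bcnf xi)) ^^ i"

end

(*
  Write s = lamLs and mu for the stable and unstable eigenvalues of the left matrix, and
  -r = lamRs and -nu for those of the right one; the hypothesis J2 < 1 is only used through
  s + r <= J2 < 1.

  Work with g = f^-1 (finv below), which is affine on each of the closed half-planes
  y >= 0 and y <= 0. The function E(x, y) = y + s x - s/(1 - s) (stable_coord) satisfies
  E(g p) = E(p) / s on the upper half-plane, so an orbit of g that enters the wedge
  {y >= 0, E > 0} stays there and tends to infinity; let G (escaping) be the set of points
  whose orbit enters the wedge. Following orbits of g through the quadrants shows that E is
  bounded off G. On the other hand, g maps a segment whose direction lies in the cone
  {mu u + v >= 0, v - nu u >= 0} (cut at the x-axis if necessary) to such a segment whose
  height is at least 1/(s + r) > 1 times the original one, while E increases along such a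
  segment by at least (1 - s) times its height. So no segment of positive height in the
  cone avoids G; vertical segments are such segments, hence G is dense.
*)

theory Submission
  imports Defs
begin

lemma quadratic_root_in_unit_interval:
  fixes T D :: real
  assumes "0 < D" and "D + 1 < T"
  obtains l where "l\<^sup>2 - T * l + D = 0" and "0 < l" and "l < 1"
proof -
  have "\<exists>l. 0 \<le> l \<and> l \<le> 1 \<and> l\<^sup>2 - T * l + D = 0"
    using assms by (intro IVT2) (auto intro!: continuous_intros)
  then obtain l where "0 \<le> l" "l \<le> 1" "l\<^sup>2 - T * l + D = 0" by blast
  moreover have "l \<noteq> 0" "l \<noteq> 1" using calculation assms by auto
  ultimately show thesis using that by simp
qed

lemma quadratic_root_in_unit_interval_unique:
  fixes T D l m :: real
  assumes "D + 1 < T"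
    and "l\<^sup>2 - T * l + D = 0" "0 < l" "l < 1"
    and "m\<^sup>2 - T * m + D = 0" "0 < m" "m < 1"
  shows "l = m"
proof (rule ccontr)
  assume "l \<noteq> m"
  moreover have "(l - m) * (l + m - T) = 0"
    using assms by (simp add: power2_eq_square algebra_simps)
  ultimately have T: "T = l + m" by simp
  have "(1 - l) * (1 - m) = 1 - T + D"
    using assms(2) unfolding T by (simp add: power2_eq_square algebra_simps)
  moreover have "0 < (1 - l) * (1 - m)" using assms by simp
  ultimately show False using assms(1) by simp
qed

lemma Phi_eigenvalues:
  assumes "(tL, dL, tR, dR) \<in> Phi"
  obtains s mu r nu where "tL = s + mu" "dL = s * mu" "tR = - (r + nu)" "dR = r * nu"
    and "lamLs (tL, dL, tR, dR) = s" "lamRs (tL, dL, tR, dR) = - r"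
    and "0 < s" "1 < mu" "0 < r" "1 < nu"
proof -
  have L: "0 < dL" "dL + 1 < tL" and R: "0 < dR" "dR + 1 < - tR"
    using assms by (auto simp: Phi_def)
  obtain s where s: "s\<^sup>2 - tL * s + dL = 0" "0 < s" "s < 1"
    using quadratic_root_in_unit_interval[OF L] .
  obtain r where r: "r\<^sup>2 - (- tR) * r + dR = 0" "0 < r" "r < 1"
    using quadratic_root_in_unit_interval[OF R] .
  have "lamLs (tL, dL, tR, dR) = s"
    unfolding lamLs_def prod.case
  proof (rule the_equality)
    fix l assume "l\<^sup>2 - tL * l + dL = 0 \<and> 0 < l \<and> l < 1"
    then have "l\<^sup>2 - tL * l + dL = 0" "0 < l" "l < 1" by simp_all
    then show "l = s" by (rule quadratic_root_in_unit_interval_unique[OF L(2) _ _ _ s])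
  qed (use s in simp)
  moreover have "lamRs (tL, dL, tR, dR) = - r"
    unfolding lamRs_def prod.case
  proof (rule the_equality)
    fix l assume "l\<^sup>2 - tR * l + dR = 0 \<and> - 1 < l \<and> l < 0"
    then have "(- l)\<^sup>2 - (- tR) * (- l) + dR = 0" "0 < - l" "- l < 1" by simp_all
    then have "- l = r" by (rule quadratic_root_in_unit_interval_unique[OF R(2) _ _ _ r])
    then show "l = - r" by simp
  qed (use r in simp)
  moreover have dL: "dL = s * (tL - s)" and dR: "dR = r * (- tR - r)"
    using s r by (simp_all add: power2_eq_square algebra_simps)
  moreover have "1 < tL - s" "1 < - tR - r"
  proof -
    have "0 < (1 - s) * (tL - s - 1)" "0 < (1 - r) * (- tR - r - 1)"
      using L R dL dR by (simp_all add: algebra_simps)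
    then show "1 < tL - s" "1 < - tR - r"
      using s r by (simp_all add: zero_less_mult_iff)
  qed
  ultimately show thesis
    using that[of s "tL - s" r "- tR - r"] s r by simp
qed

lemma lamLs_plus_abs_lamRs_le_J2: "lamLs xi + \<bar>lamRs xi\<bar> \<le> J2 xi"
  unfolding J2_def by linarith


locale bcnf_saddles =
  fixes s mu r nu :: real
  assumes s_pos: "0 < s" and r_pos: "0 < r" and mu_gt_1: "1 < mu" and nu_gt_1: "1 < nu"
    and s_plus_r: "s + r < 1"
begin

lemma s_lt_1: "s < 1" and r_lt_1: "r < 1"
  using s_pos r_pos s_plus_r by auto

definition finv :: "real \<times> real \<Rightarrow> real \<times> real" where
  "finv = (\<lambda>(x, y). if 0 \<le> y then (- y / (s * mu), x - 1 + y / s + y / mu)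
                    else (- y / (r * nu), x - 1 - y / r - y / nu))"

lemma finv_upper: "0 \<le> y \<Longrightarrow> finv (x, y) = (- y / (s * mu), x - 1 + y / s + y / mu)"
  by (simp add: finv_def)

lemma finv_lower: "y \<le> 0 \<Longrightarrow> finv (x, y) = (- y / (r * nu), x - 1 - y / r - y / nu)"
  by (cases "y = 0") (auto simp: finv_def)

lemma inv_bcnf: "inv (bcnf (s + mu, s * mu, - (r + nu), r * nu)) = finv"
proof (rule inv_unique_comp; rule ext)
  fix p :: "real \<times> real"
  obtain x y where p: "p = (x, y)" by fastforce
  show "(bcnf (s + mu, s * mu, - (r + nu), r * nu) \<circ> finv) p = id p"
    using s_pos r_pos mu_gt_1 nu_gt_1 unfolding p
    by (cases "0 \<le> y") (auto simp: finv_def bcnf_def field_simps)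
  show "(finv \<circ> bcnf (s + mu, s * mu, - (r + nu), r * nu)) p = id p"
  proof (cases "x \<le> 0")
    case True
    then have "0 \<le> - (s * mu) * x" using s_pos mu_gt_1 by (simp add: mult_nonneg_nonpos)
    then show ?thesis
      using True s_pos mu_gt_1 unfolding p by (simp add: bcnf_def finv_upper field_simps)
  next
    case False
    then have "- (r * nu) * x \<le> 0" using r_pos nu_gt_1 by simp
    then show ?thesis
      using False r_pos nu_gt_1 unfolding p by (simp add: bcnf_def finv_lower field_simps)
  qed
qed

text \<open>\<open>y + s * x\<close> is the coordinate along the left eigenvector of the left matrix for the
  eigenvalue \<open>s\<close>, and \<open>kappa\<close> is its value at the fixed point of the left piece.\<close>

definition kappa :: real where "kappa = s / (1 - s)"

definition stable_coord :: "real \<times> real \<Rightarrow> real" where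
  "stable_coord = (\<lambda>(x, y). y + s * x - kappa)"

lemma kappa_pos: "0 < kappa"
  using s_pos s_lt_1 by (simp add: kappa_def)

lemma stable_coord_finv_upper: "0 \<le> snd p \<Longrightarrow> stable_coord (finv p) = stable_coord p / s"
  using s_pos s_lt_1 mu_gt_1
  by (cases p) (simp add: finv_upper stable_coord_def kappa_def field_simps)

lemma stable_coord_funpow_upper:
  assumes "\<forall>k<n. 0 \<le> snd ((finv ^^ k) p)"
  shows "stable_coord ((finv ^^ n) p) = stable_coord p / s ^ n"
  using assms by (induction n) (simp_all add: stable_coord_finv_upper)

lemma stable_coord_le_norm: "stable_coord p \<le> 2 * norm p"
proof -
  obtain x y where p: "p = (x, y)" by fastforce
  have "s * x \<le> s * \<bar>x\<bar>" using s_pos by (simp add: mult_left_mono)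
  also have "\<dots> \<le> \<bar>x\<bar>" using s_pos s_lt_1 by (simp add: mult_left_le_one_le)
  finally have "s * x \<le> \<bar>x\<bar>" .
  moreover have "\<bar>x\<bar> \<le> norm p" "\<bar>y\<bar> \<le> norm p"
    using norm_fst_le[of x y] norm_snd_le[of y x] by (simp_all add: p)
  ultimately show ?thesis using kappa_pos by (simp add: p stable_coord_def)
qed

definition expanding_wedge :: "(real \<times> real) set" where
  "expanding_wedge = {p. 0 \<le> snd p \<and> 0 < stable_coord p}"

lemma finv_expanding_wedge: "p \<in> expanding_wedge \<Longrightarrow> finv p \<in> expanding_wedge"
proof -
  obtain x y where p: "p = (x, y)" by fastforce
  assume "p \<in> expanding_wedge"
  then have y: "0 \<le> y" and "kappa - y < s * x"
    by (simp_all add: expanding_wedge_def stable_coord_def p)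
  then have "(kappa - y) / s < x" using s_pos by (simp add: field_simps)
  moreover have "(kappa - y) / s - 1 + y / s = kappa"
    using s_pos s_lt_1 by (simp add: kappa_def field_simps)
  ultimately have "kappa + y / mu < x - 1 + y / s + y / mu" by linarith
  moreover have "0 \<le> kappa + y / mu" using kappa_pos y mu_gt_1 by simp
  moreover have "0 < stable_coord (finv p)"
    using \<open>p \<in> expanding_wedge\<close> s_pos y
    by (simp add: stable_coord_finv_upper expanding_wedge_def p)
  ultimately show ?thesis by (simp add: expanding_wedge_def p finv_upper y)
qed

lemma expanding_wedge_norm_tendsto:
  assumes "p \<in> expanding_wedge"
  shows "filterlim (\<lambda>n. norm ((finv ^^ n) p)) at_top sequentially"
proof -
  have wedge: "(finv ^^ n) p \<in> expanding_wedge" for n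
    using assms by (induction n) (simp_all add: finv_expanding_wedge)
  have bound: "stable_coord p / 2 * inverse (s ^ n) \<le> norm ((finv ^^ n) p)" for n
  proof -
    have "stable_coord ((finv ^^ n) p) = stable_coord p * inverse (s ^ n)"
      using wedge by (simp add: stable_coord_funpow_upper expanding_wedge_def divide_inverse)
    then show ?thesis using stable_coord_le_norm[of "(finv ^^ n) p"] by simp
  qed
  moreover have lim: "filterlim (\<lambda>n. stable_coord p / 2 * inverse (s ^ n)) at_top sequentially"
    using assms s_pos s_lt_1 unfolding expanding_wedge_def
    by (intro filterlim_tendsto_pos_mult_at_top[OF tendsto_const]
        filterlim_inverse_at_top[OF LIMSEQ_power_zero]) simp_all
  show ?thesis by (rule filterlim_at_top_mono[OF lim]) (intro always_eventually allI bound)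
qed

definition escaping :: "(real \<times> real) set" where
  "escaping = {p. \<exists>n. (finv ^^ n) p \<in> expanding_wedge}"

lemma escaping_norm_tendsto:
  assumes "p \<in> escaping"
  shows "filterlim (\<lambda>n. norm ((finv ^^ n) p)) at_top sequentially"
proof -
  obtain k where "(finv ^^ k) p \<in> expanding_wedge"
    using assms unfolding escaping_def by blast
  then have "filterlim (\<lambda>n. norm ((finv ^^ (n + k)) p)) at_top sequentially"
    by (simp add: funpow_add expanding_wedge_norm_tendsto)
  moreover have "(\<forall>\<^sub>F n in sequentially. Z \<le> norm ((finv ^^ (n + k)) p)) \<longleftrightarrow>
      (\<forall>\<^sub>F n in sequentially. Z \<le> norm ((finv ^^ n) p))" for Z
    by (rule eventually_sequentially_seg)
  ultimately show ?thesis unfolding filterlim_at_top by simp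
qed

lemma expanding_wedge_subset_escaping: "expanding_wedge \<subseteq> escaping"
proof
  fix p assume "p \<in> expanding_wedge"
  then have "(finv ^^ 0) p \<in> expanding_wedge" by simp
  then show "p \<in> escaping" unfolding escaping_def mem_Collect_eq by (rule exI)
qed

lemma finv_not_escaping: "p \<notin> escaping \<Longrightarrow> finv p \<notin> escaping"
proof
  assume "finv p \<in> escaping"
  then obtain n where "(finv ^^ n) (finv p) \<in> expanding_wedge"
    unfolding escaping_def mem_Collect_eq by (elim exE)
  then have "(finv ^^ Suc n) p \<in> expanding_wedge" by (simp only: funpow_Suc_right comp_apply)
  then have "p \<in> escaping" unfolding escaping_def mem_Collect_eq by (rule exI)
  moreover assume "p \<notin> escaping"
  ultimately show False by contradiction
qed

lemma funpow_finv_not_escaping: "p \<notin> escaping \<Longrightarrow> (finv ^^ n) p \<notin> escaping"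
  by (induction n) (simp_all add: finv_not_escaping)

lemma stable_coord_nonpos: "p \<notin> escaping \<Longrightarrow> 0 \<le> snd p \<Longrightarrow> stable_coord p \<le> 0"
  using expanding_wedge_subset_escaping unfolding expanding_wedge_def by fastforce

lemma right_half_plane_not_escaping:
  assumes "(x, y) \<notin> escaping" and "0 \<le> x"
  shows "s * x \<le> 1 + kappa" and "\<bar>y\<bar> \<le> 1 + kappa"
proof -
  have upper: "b + s * a \<le> kappa" if "(a, b) \<notin> escaping" "0 \<le> b" for a b
    using stable_coord_nonpos[of "(a, b)"] that by (simp add: stable_coord_def)
  have "0 \<le> s * x" "s * x \<le> x" using assms(2) s_pos s_lt_1 by (simp_all add: mult_left_le_one_le)
  have "s * x \<le> 1 + kappa \<and> \<bar>y\<bar> \<le> 1 + kappa"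
  proof (cases "0 \<le> y")
    case True
    then show ?thesis
      using upper[OF assms(1) True] \<open>0 \<le> s * x\<close> unfolding abs_le_iff by (intro conjI; linarith)
  next
    case False
    define x' y' where "x' = - y / (r * nu)" and "y' = x - 1 - y / r - y / nu"
    have "finv (x, y) = (x', y')" using False by (simp add: finv_lower x'_def y'_def)
    then have "(x', y') \<notin> escaping" using finv_not_escaping[OF assms(1)] by simp
    moreover have "0 \<le> x'" using False r_pos nu_gt_1 by (simp add: x'_def divide_nonpos_pos)
    then have "0 \<le> s * x'" using s_pos by simp
    ultimately have "y' \<le> kappa"
      using upper[of x' y'] kappa_pos by (cases "0 \<le> y'") auto
    moreover have "r * (- y) \<le> - y" using False r_lt_1 by (simp add: mult_left_le_one_le)
    then have "- y \<le> - y / r" using r_pos by (simp add: divide_le_eq mult.commute)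
    moreover have "0 \<le> - y / nu" using False nu_gt_1 by (simp add: divide_nonpos_pos)
    ultimately have "x - y \<le> 1 + kappa" unfolding y'_def by linarith
    then show ?thesis
      using False \<open>s * x \<le> x\<close> assms(2) unfolding abs_le_iff by (intro conjI; linarith)
  qed
  then show "s * x \<le> 1 + kappa" "\<bar>y\<bar> \<le> 1 + kappa" by simp_all
qed

lemma lower_half_plane_not_escaping:
  obtains B where "0 \<le> B" and "\<And>p. p \<notin> escaping \<Longrightarrow> snd p < 0 \<Longrightarrow> \<bar>stable_coord p\<bar> \<le> B"
proof
  define Y where "Y = r * nu * (1 + kappa) / s"
  define X where "X = 2 + kappa + Y / r + Y / nu"
  show "0 \<le> Y + s * X + kappa"
    using r_pos s_pos nu_gt_1 kappa_pos by (simp add: X_def Y_def)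
  fix p assume p: "p \<notin> escaping" "snd p < 0"
  obtain x y where xy: "p = (x, y)" by fastforce
  define x' y' where "x' = - y / (r * nu)" and "y' = x - 1 - y / r - y / nu"
  have "finv (x, y) = (x', y')" using p by (simp add: finv_lower x'_def y'_def xy)
  then have "(x', y') \<notin> escaping" using finv_not_escaping[OF p(1)] by (simp add: xy)
  moreover have "0 \<le> x'" using p r_pos nu_gt_1 by (simp add: x'_def xy divide_nonpos_pos)
  ultimately have "s * x' \<le> 1 + kappa" "\<bar>y'\<bar> \<le> 1 + kappa"
    using right_half_plane_not_escaping by blast+
  then have "- y \<le> Y" and "0 \<le> - y"
    using p s_pos r_pos nu_gt_1 by (simp_all add: x'_def Y_def xy field_simps)
  then have "- y / r \<le> Y / r" "- y / nu \<le> Y / nu"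
    using divide_right_mono[of "- y" Y r] divide_right_mono[of "- y" Y nu] r_pos nu_gt_1
    by simp_all
  moreover have "0 \<le> - y / r" "0 \<le> - y / nu"
    using \<open>0 \<le> - y\<close> r_pos nu_gt_1 by (simp_all add: divide_nonpos_pos)
  moreover have "x = y' + 1 + y / r + y / nu" by (simp add: y'_def)
  ultimately have "\<bar>x\<bar> \<le> X"
    using \<open>\<bar>y'\<bar> \<le> 1 + kappa\<close> unfolding X_def by linarith
  then have "\<bar>s * x\<bar> \<le> s * X" using s_pos by (simp add: abs_mult)
  then have "- (s * X) \<le> s * x" "s * x \<le> s * X" by (auto dest: abs_le_D1 abs_le_D2)
  moreover have "stable_coord p = y + s * x - kappa" by (simp add: stable_coord_def xy)
  ultimately show "\<bar>stable_coord p\<bar> \<le> Y + s * X + kappa"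
    using \<open>- y \<le> Y\<close> \<open>0 \<le> - y\<close> kappa_pos unfolding abs_le_iff by linarith
qed

lemma stable_coord_finv_upper_snd:
  "0 \<le> snd p \<Longrightarrow> stable_coord (finv p) = snd (finv p) - snd p / mu - kappa"
  using s_pos mu_gt_1 by (cases p) (simp add: finv_upper stable_coord_def)

text \<open>Along an orbit that stays in the upper half-plane, the heights obey
  \<open>y (n + 1) \<le> kappa + y n / mu\<close> and stay bounded, which bounds \<open>stable_coord\<close> from below,
  while \<open>stable_coord\<close> is multiplied by \<open>1 / s\<close> in every step.\<close>

lemma upper_orbit_stable_coord_nonneg:
  assumes "p \<notin> escaping" and upper: "\<And>n. 0 \<le> snd ((finv ^^ n) p)"
  shows "0 \<le> stable_coord p"
proof -
  define y where "y n = snd ((finv ^^ n) p)" for n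
  define M where "M = max (y 0) (kappa * mu / (mu - 1))"
  have E_Suc: "stable_coord ((finv ^^ Suc n) p) = y (Suc n) - y n / mu - kappa" for n
    using stable_coord_finv_upper_snd[OF upper[of n]] by (simp add: y_def)
  have E_nonpos: "stable_coord ((finv ^^ n) p) \<le> 0" for n
    using stable_coord_nonpos[OF funpow_finv_not_escaping[OF assms(1)] upper] .
  have y_Suc: "y (Suc n) \<le> kappa + y n / mu" for n
    using E_Suc[of n] E_nonpos[of "Suc n"] by linarith
  have M: "kappa + M / mu \<le> M"
  proof -
    have "kappa * mu / (mu - 1) \<le> M" by (simp add: M_def)
    then have "kappa * mu \<le> M * (mu - 1)"
      using mu_gt_1 by (simp add: pos_divide_le_eq)
    then show ?thesis using mu_gt_1 by (simp add: field_simps)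
  qed
  have y_le_M: "y n \<le> M" for n
  proof (induction n)
    case (Suc n)
    then have "y n / mu \<le> M / mu" using mu_gt_1 by (simp add: divide_right_mono)
    then show ?case using y_Suc[of n] M by simp
  qed (simp add: M_def)
  have "- (M / mu + kappa) * s ^ Suc n \<le> stable_coord p" for n
  proof -
    have "y n / mu \<le> M / mu" using y_le_M[of n] mu_gt_1 by (simp add: divide_right_mono)
    moreover have "0 \<le> y (Suc n)" using upper by (simp only: y_def)
    ultimately have "- (M / mu + kappa) \<le> stable_coord ((finv ^^ Suc n) p)"
      using E_Suc[of n] by linarith
    also have "\<dots> = stable_coord p / s ^ Suc n"
      using upper by (simp add: stable_coord_funpow_upper del: funpow.simps)
    finally show ?thesis using s_pos by (simp add: field_simps)
  qed
  moreover have "(\<lambda>n. - (M / mu + kappa) * s ^ Suc n) \<longlonglongrightarrow> 0"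
    using s_pos s_lt_1 by (intro tendsto_mult_right_zero LIMSEQ_power_zero[THEN LIMSEQ_Suc]) simp
  ultimately show ?thesis by (intro LIMSEQ_le_const2) auto
qed

lemma stable_coord_bounded_off_escaping:
  obtains B where "\<And>p. p \<notin> escaping \<Longrightarrow> \<bar>stable_coord p\<bar> \<le> B"
proof -
  obtain B where "0 \<le> B" and B: "\<And>p. p \<notin> escaping \<Longrightarrow> snd p < 0 \<Longrightarrow> \<bar>stable_coord p\<bar> \<le> B"
    using lower_half_plane_not_escaping by metis
  have "\<bar>stable_coord p\<bar> \<le> B" if p: "p \<notin> escaping" for p
  proof (cases "\<exists>n. snd ((finv ^^ n) p) < 0")
    case True
    then obtain n where n: "snd ((finv ^^ n) p) < 0" and before: "\<forall>k<n. 0 \<le> snd ((finv ^^ k) p)"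
      using exists_least_iff[of "\<lambda>n. snd ((finv ^^ n) p) < 0"] by (auto simp: not_less)
    from before have "stable_coord ((finv ^^ n) p) = stable_coord p / s ^ n"
      by (rule stable_coord_funpow_upper)
    moreover have "\<bar>stable_coord ((finv ^^ n) p)\<bar> \<le> B"
      using B[OF funpow_finv_not_escaping[OF p] n] .
    ultimately have "\<bar>stable_coord p\<bar> \<le> B * s ^ n"
      using s_pos by (simp add: abs_div pos_divide_le_eq)
    also have "\<dots> \<le> B" using \<open>0 \<le> B\<close> s_pos s_lt_1 by (simp add: mult_left_le power_le_one)
    finally show ?thesis .
  next
    case False
    then have upper: "0 \<le> snd ((finv ^^ n) p)" for n by (simp add: not_less)
    have "0 \<le> stable_coord p" by (rule upper_orbit_stable_coord_nonneg[OF p upper])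
    moreover have "stable_coord p \<le> 0" using stable_coord_nonpos[OF p] upper[of 0] by simp
    ultimately show ?thesis using \<open>0 \<le> B\<close> by simp
  qed
  then show thesis by (rule that)
qed

definition dir_cone :: "(real \<times> real) set" where
  "dir_cone = {(u, v). 0 \<le> mu * u + v \<and> 0 \<le> v - nu * u}"

lemma dir_cone_abs_le: "(u, v) \<in> dir_cone \<Longrightarrow> \<bar>u\<bar> \<le> v"
proof -
  assume "(u, v) \<in> dir_cone"
  then have "0 \<le> mu * u + v" "0 \<le> v - nu * u" by (simp_all add: dir_cone_def)
  moreover have "u \<le> nu * u" if "0 \<le> u" using that nu_gt_1 by (simp add: mult_le_cancel_right1)
  moreover have "mu * u \<le> u" if "u < 0" using that mu_gt_1 by (simp add: mult_le_cancel_right1)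
  ultimately show ?thesis by (cases "0 \<le> u") linarith+
qed

lemma dir_cone_scaleR: "d \<in> dir_cone \<Longrightarrow> 0 \<le> a \<Longrightarrow> a *\<^sub>R d \<in> dir_cone"
proof (cases d)
  case (Pair u v)
  assume "d \<in> dir_cone" "0 \<le> a"
  then have "0 \<le> a * (mu * u + v)" "0 \<le> a * (v - nu * u)" by (simp_all add: dir_cone_def Pair)
  then show ?thesis by (simp add: dir_cone_def Pair algebra_simps)
qed

lemma dir_cone_finv_upper:
  assumes "(u, v) \<in> dir_cone"
  shows "(- v / (s * mu), u + v / s + v / mu) \<in> dir_cone" and "v \<le> s * (u + v / s + v / mu)"
proof -
  have cone: "0 \<le> mu * u + v" "0 \<le> v - nu * u" and "0 \<le> v"
    using assms dir_cone_abs_le[OF assms] by (simp_all add: dir_cone_def)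
  then have "0 \<le> u + v / mu" "0 \<le> v / s" "0 \<le> nu * v / (s * mu)"
    using s_pos mu_gt_1 nu_gt_1 by (simp_all add: field_simps)
  moreover have "mu * (- v / (s * mu)) = - (v / s)" "nu * (- v / (s * mu)) = - (nu * v / (s * mu))"
    using s_pos mu_gt_1 by simp_all
  ultimately show "(- v / (s * mu), u + v / s + v / mu) \<in> dir_cone"
    unfolding dir_cone_def by simp
  have "s * (u + v / s + v / mu) = v + s * (u + v / mu)" using s_pos by (simp add: algebra_simps)
  then show "v \<le> s * (u + v / s + v / mu)" using \<open>0 \<le> u + v / mu\<close> s_pos by simp
qed

lemma dir_cone_finv_lower:
  assumes "(u, v) \<in> dir_cone"
  shows "(v / (r * nu), - u + v / r + v / nu) \<in> dir_cone" and "v \<le> r * (- u + v / r + v / nu)"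
proof -
  have cone: "0 \<le> mu * u + v" "0 \<le> v - nu * u" and "0 \<le> v"
    using assms dir_cone_abs_le[OF assms] by (simp_all add: dir_cone_def)
  then have "0 \<le> v / nu - u" "0 \<le> v / r" "0 \<le> mu * v / (r * nu)"
    using r_pos mu_gt_1 nu_gt_1 by (simp_all add: field_simps)
  moreover have "nu * (v / (r * nu)) = v / r" "mu * (v / (r * nu)) = mu * v / (r * nu)"
    using r_pos nu_gt_1 by simp_all
  ultimately show "(v / (r * nu), - u + v / r + v / nu) \<in> dir_cone"
    unfolding dir_cone_def by simp
  have "r * (- u + v / r + v / nu) = v + r * (v / nu - u)" using r_pos by (simp add: algebra_simps)
  then show "v \<le> r * (- u + v / r + v / nu)" using \<open>0 \<le> v / nu - u\<close> r_pos by simp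
qed

lemma finv_convex_combination:
  assumes "0 \<le> u" "u \<le> 1"
    and half_plane: "0 \<le> snd a \<and> 0 \<le> snd b \<or> snd a \<le> 0 \<and> snd b \<le> 0"
  shows "finv ((1 - u) *\<^sub>R a + u *\<^sub>R b) = (1 - u) *\<^sub>R finv a + u *\<^sub>R finv b"
proof -
  obtain xa ya xb yb where ab: "a = (xa, ya)" "b = (xb, yb)" by fastforce
  consider "0 \<le> ya" "0 \<le> yb" | "ya \<le> 0" "yb \<le> 0" using half_plane ab by auto
  then show ?thesis
  proof cases
    case 1
    then have "0 \<le> (1 - u) * ya + u * yb" using assms by simp
    then show ?thesis using 1 s_pos mu_gt_1
      by (simp add: ab finv_upper field_simps)
  next
    case 2
    then have "(1 - u) * ya + u * yb \<le> 0" using assms by (simp add: add_nonpos_nonpos mult_nonneg_nonpos)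
    then show ?thesis using 2 r_pos nu_gt_1
      by (simp add: ab finv_lower field_simps)
  qed
qed

lemma finv_closed_segment_not_escaping:
  assumes "closed_segment a b \<inter> escaping = {}"
    and "0 \<le> snd a \<and> 0 \<le> snd b \<or> snd a \<le> 0 \<and> snd b \<le> 0"
  shows "closed_segment (finv a) (finv b) \<inter> escaping = {}"
proof -
  have "q \<notin> escaping" if q_seg: "q \<in> closed_segment (finv a) (finv b)" for q
  proof -
    obtain u where u: "0 \<le> u" "u \<le> 1" and q: "q = (1 - u) *\<^sub>R finv a + u *\<^sub>R finv b"
      using q_seg by (auto simp: in_segment)
    have "(1 - u) *\<^sub>R a + u *\<^sub>R b \<in> closed_segment a b" using u by (auto simp: in_segment)
    then have "(1 - u) *\<^sub>R a + u *\<^sub>R b \<notin> escaping" using assms(1) by blast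
    then show ?thesis
      using finv_not_escaping finv_convex_combination[OF u assms(2)] q by metis
  qed
  then show ?thesis by blast
qed

definition nonescaping_cone_segment :: "real \<times> real \<Rightarrow> real \<times> real \<Rightarrow> bool" where
  "nonescaping_cone_segment a b \<longleftrightarrow> closed_segment a b \<inter> escaping = {} \<and> b - a \<in> dir_cone"

lemma nonescaping_cone_segment_height_nonneg:
  assumes "nonescaping_cone_segment a b"
  shows "0 \<le> snd (b - a)"
proof -
  obtain u v where uv: "b - a = (u, v)" by fastforce
  then have "\<bar>u\<bar> \<le> v" using assms dir_cone_abs_le by (simp add: nonescaping_cone_segment_def)
  then show ?thesis by (simp add: uv)
qed

lemma nonescaping_cone_segment_upper:
  assumes seg: "nonescaping_cone_segment a b" and "0 \<le> snd a" "0 \<le> snd b"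
  shows "nonescaping_cone_segment (finv a) (finv b)" and "snd (b - a) \<le> s * snd (finv b - finv a)"
proof -
  obtain xa ya xb yb where ab: "a = (xa, ya)" "b = (xb, yb)" by fastforce
  define u v where "u = xb - xa" and "v = yb - ya"
  have diff: "finv b - finv a = (- v / (s * mu), u + v / s + v / mu)"
    using assms(2,3) by (simp add: ab u_def v_def finv_upper diff_divide_distrib)
  have cone: "(u, v) \<in> dir_cone" using seg by (simp add: nonescaping_cone_segment_def ab u_def v_def)
  have "closed_segment (finv a) (finv b) \<inter> escaping = {}"
    using seg assms(2,3) by (simp add: nonescaping_cone_segment_def finv_closed_segment_not_escaping)
  then show "nonescaping_cone_segment (finv a) (finv b)"
    unfolding nonescaping_cone_segment_def diff using dir_cone_finv_upper(1)[OF cone] by simp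
  have "snd (b - a) = v" by (simp add: ab v_def)
  then show "snd (b - a) \<le> s * snd (finv b - finv a)"
    unfolding diff using dir_cone_finv_upper(2)[OF cone] by simp
qed

lemma nonescaping_cone_segment_lower:
  assumes seg: "nonescaping_cone_segment a b" and "snd a \<le> 0" "snd b \<le> 0"
  shows "nonescaping_cone_segment (finv b) (finv a)" and "snd (b - a) \<le> r * snd (finv a - finv b)"
proof -
  obtain xa ya xb yb where ab: "a = (xa, ya)" "b = (xb, yb)" by fastforce
  define u v where "u = xb - xa" and "v = yb - ya"
  have diff: "finv a - finv b = (v / (r * nu), - u + v / r + v / nu)"
    using assms(2,3) by (simp add: ab u_def v_def finv_lower diff_divide_distrib)
  have cone: "(u, v) \<in> dir_cone" using seg by (simp add: nonescaping_cone_segment_def ab u_def v_def)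
  have "closed_segment (finv a) (finv b) \<inter> escaping = {}"
    using seg assms(2,3) by (simp add: nonescaping_cone_segment_def finv_closed_segment_not_escaping)
  then show "nonescaping_cone_segment (finv b) (finv a)"
    unfolding nonescaping_cone_segment_def diff closed_segment_commute[of "finv b"]
    using dir_cone_finv_lower(1)[OF cone] by simp
  have "snd (b - a) = v" by (simp add: ab v_def)
  then show "snd (b - a) \<le> r * snd (finv a - finv b)"
    unfolding diff using dir_cone_finv_lower(2)[OF cone] by simp
qed

lemma nonescaping_cone_subsegments:
  assumes seg: "nonescaping_cone_segment a b" and t: "0 \<le> t" "t \<le> 1"
  shows "nonescaping_cone_segment a (a + t *\<^sub>R (b - a))"
    and "nonescaping_cone_segment (a + t *\<^sub>R (b - a)) b"
proof -
  define z where "z = a + t *\<^sub>R (b - a)"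
  have "z \<in> closed_segment a b"
    unfolding in_segment z_def using t by (intro exI[of _ t]) (simp add: algebra_simps)
  then have "closed_segment a z \<subseteq> closed_segment a b" "closed_segment z b \<subseteq> closed_segment a b"
    by (simp_all add: subset_closed_segment)
  moreover have "z - a = t *\<^sub>R (b - a)" "b - z = (1 - t) *\<^sub>R (b - a)"
    by (simp_all add: z_def algebra_simps)
  ultimately show "nonescaping_cone_segment a z" "nonescaping_cone_segment z b"
    using seg t dir_cone_scaleR unfolding nonescaping_cone_segment_def by auto
qed

text \<open>A segment crossing the \<open>x\<close>-axis is cut there; as the heights of the two pieces add up,
  one of them grows by the factor \<open>1 / (s + r)\<close>.\<close>

lemma nonescaping_cone_segment_growth_crossing:
  assumes seg: "nonescaping_cone_segment a b" and ab: "snd a < 0" "0 < snd b"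
  obtains a' b' where "nonescaping_cone_segment a' b'" and "snd (b - a) \<le> (s + r) * snd (b' - a')"
proof -
  define z where "z = a + (- snd a / snd (b - a)) *\<^sub>R (b - a)"
  have "0 < snd (b - a)" using ab by simp
  have t0: "0 \<le> - snd a / snd (b - a)"
    by (rule divide_nonneg_pos) (use ab \<open>0 < snd (b - a)\<close> in simp_all)
  have t1: "- snd a / snd (b - a) \<le> 1"
    by (simp only: divide_le_eq_1_pos[OF \<open>0 < snd (b - a)\<close>]) (use ab in simp)
  note pieces = nonescaping_cone_subsegments[OF seg t0 t1, folded z_def]
  have "snd z = 0" using ab by (simp add: z_def)
  note up = nonescaping_cone_segment_upper[OF pieces(2)] and
    down = nonescaping_cone_segment_lower[OF pieces(1)]
  define h1 h2 where "h1 = snd (finv b - finv z)" and "h2 = snd (finv a - finv z)"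
  have "snd (b - a) = snd (b - z) + snd (z - a)" by simp
  also have "\<dots> \<le> s * h1 + r * h2"
    using up(2) down(2) ab \<open>snd z = 0\<close> by (simp add: h1_def h2_def add_mono)
  finally have sum: "snd (b - a) \<le> s * h1 + r * h2" .
  show thesis
  proof (cases "h2 \<le> h1")
    case True
    then have "s * h1 + r * h2 \<le> (s + r) * h1" using r_pos by (simp add: distrib_right)
    then show thesis using that[OF up(1)] sum ab \<open>snd z = 0\<close> by (simp add: h1_def)
  next
    case False
    then have "s * h1 + r * h2 \<le> (s + r) * h2" using s_pos by (simp add: distrib_right)
    then show thesis using that[OF down(1)] sum ab \<open>snd z = 0\<close> by (simp add: h2_def)
  qed
qed

lemma nonescaping_cone_segment_growth:
  assumes seg: "nonescaping_cone_segment a b"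
  obtains a' b' where "nonescaping_cone_segment a' b'" and "snd (b - a) \<le> (s + r) * snd (b' - a')"
proof -
  have "0 \<le> snd (b - a)" by (rule nonescaping_cone_segment_height_nonneg[OF seg])
  then consider "0 \<le> snd a" "0 \<le> snd b" | "snd a \<le> 0" "snd b \<le> 0" | "snd a < 0" "0 < snd b"
    by fastforce
  then show thesis
  proof cases
    case 1
    note up = nonescaping_cone_segment_upper[OF seg 1]
    have "0 \<le> r * snd (finv b - finv a)"
      using nonescaping_cone_segment_height_nonneg[OF up(1)] r_pos by simp
    then show thesis using that[OF up(1)] up(2) by (simp add: distrib_right)
  next
    case 2
    note down = nonescaping_cone_segment_lower[OF seg 2]
    have "0 \<le> s * snd (finv a - finv b)"
      using nonescaping_cone_segment_height_nonneg[OF down(1)] s_pos by simp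
    then show thesis using that[OF down(1)] down(2) by (simp add: distrib_right)
  next
    case 3
    then show thesis using nonescaping_cone_segment_growth_crossing[OF seg] that by blast
  qed
qed

lemma nonescaping_cone_segment_growth_funpow:
  assumes "nonescaping_cone_segment a b"
  shows "\<exists>a' b'. nonescaping_cone_segment a' b' \<and> snd (b - a) \<le> (s + r) ^ n * snd (b' - a')"
proof (induction n)
  case 0
  show ?case by (rule exI[of _ a], rule exI[of _ b]) (simp add: assms)
next
  case (Suc n)
  then obtain a' b' where seg: "nonescaping_cone_segment a' b'"
    and le: "snd (b - a) \<le> (s + r) ^ n * snd (b' - a')" by blast
  obtain a'' b'' where seg': "nonescaping_cone_segment a'' b''"
    and grow: "snd (b' - a') \<le> (s + r) * snd (b'' - a'')"
    using nonescaping_cone_segment_growth[OF seg] .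
  have "0 \<le> (s + r) ^ n" using s_pos r_pos by simp
  then have "snd (b - a) \<le> (s + r) ^ n * ((s + r) * snd (b'' - a''))"
    using le mult_left_mono[OF grow \<open>0 \<le> (s + r) ^ n\<close>] by linarith
  then have "snd (b - a) \<le> (s + r) ^ Suc n * snd (b'' - a'')" by (simp add: mult_ac)
  then show ?case using seg' by blast
qed

lemma nonescaping_cone_segment_height_bounded:
  obtains H where "\<And>a b. nonescaping_cone_segment a b \<Longrightarrow> snd (b - a) \<le> H"
proof -
  obtain B where B: "\<And>p. p \<notin> escaping \<Longrightarrow> \<bar>stable_coord p\<bar> \<le> B"
    using stable_coord_bounded_off_escaping by metis
  have "snd (b - a) \<le> 2 * B / (1 - s)" if seg: "nonescaping_cone_segment a b" for a b
  proof -
    obtain xa ya xb yb where ab: "a = (xa, ya)" "b = (xb, yb)" by fastforce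
    have "a \<notin> escaping" "b \<notin> escaping"
      using seg by (auto simp: nonescaping_cone_segment_def)
    then have "stable_coord b - stable_coord a \<le> 2 * B"
      using B[of a] B[of b] by (auto simp: abs_le_iff)
    moreover have "\<bar>xb - xa\<bar> \<le> yb - ya"
      using seg dir_cone_abs_le by (simp add: nonescaping_cone_segment_def ab)
    then have "xa - xb \<le> yb - ya" by (simp add: abs_le_iff)
    then have "s * (xa - xb) \<le> s * (yb - ya)" using s_pos by (simp add: mult_left_mono)
    ultimately have "(1 - s) * (yb - ya) \<le> 2 * B"
      by (simp add: ab stable_coord_def algebra_simps)
    then show ?thesis using s_lt_1 by (simp add: ab pos_le_divide_eq mult.commute)
  qed
  then show thesis by (rule that)
qed

lemma nonescaping_cone_segment_flat:
  assumes "nonescaping_cone_segment a b"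
  shows "snd (b - a) = 0"
proof (rule ccontr)
  assume "snd (b - a) \<noteq> 0"
  then have h: "0 < snd (b - a)"
    using nonescaping_cone_segment_height_nonneg[OF assms] by simp
  obtain H where H: "\<And>a b. nonescaping_cone_segment a b \<Longrightarrow> snd (b - a) \<le> H"
    using nonescaping_cone_segment_height_bounded by metis
  have "0 \<le> H" using H[OF assms] h by simp
  obtain n where n: "(s + r) ^ n < snd (b - a) / (H + 1)"
    using real_arch_pow_inv[of "snd (b - a) / (H + 1)" "s + r"] h \<open>0 \<le> H\<close> s_plus_r by auto
  obtain a' b' where seg: "nonescaping_cone_segment a' b'"
    and le: "snd (b - a) \<le> (s + r) ^ n * snd (b' - a')"
    using nonescaping_cone_segment_growth_funpow[OF assms] by blast
  from seg have "snd (b' - a') \<le> H" by (rule H)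
  then have "(s + r) ^ n * snd (b' - a') \<le> (s + r) ^ n * (H + 1)"
    using s_pos r_pos by (intro mult_left_mono) simp_all
  also have "\<dots> < snd (b - a)" using n \<open>0 \<le> H\<close> by (simp add: pos_less_divide_eq)
  finally show False using le by simp
qed

lemma closure_escaping: "closure escaping = UNIV"
proof -
  have "\<exists>p\<in>escaping. dist p z < e" if "0 < e" for z :: "real \<times> real" and e
  proof (rule ccontr)
    assume "\<not> (\<exists>p\<in>escaping. dist p z < e)"
    then have "ball z e \<inter> escaping = {}" by (auto simp: dist_commute)
    define b where "b = z + (0, e / 2)"
    have "b \<in> ball z e" using \<open>0 < e\<close> by (simp add: b_def dist_norm)
    then have "closed_segment z b \<subseteq> ball z e" using \<open>0 < e\<close> by (simp add: closed_segment_subset)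
    moreover have "b - z \<in> dir_cone" using \<open>0 < e\<close> by (simp add: b_def dir_cone_def)
    ultimately have "nonescaping_cone_segment z b"
      using \<open>ball z e \<inter> escaping = {}\<close> by (auto simp: nonescaping_cone_segment_def)
    then have "snd (b - z) = 0" by (rule nonescaping_cone_segment_flat)
    then show False using \<open>0 < e\<close> by (simp add: b_def)
  qed
  then show ?thesis by (auto simp: closure_approachable)
qed

theorem closure_finv_escaping_orbits:
  "closure {p. filterlim (\<lambda>n. norm ((finv ^^ n) p)) at_top sequentially} = UNIV"
proof -
  have "escaping \<subseteq> {p. filterlim (\<lambda>n. norm ((finv ^^ n) p)) at_top sequentially}"
    using escaping_norm_tendsto by blast
  then show ?thesis using closure_mono closure_escaping by blast
qed

end

theorem lemma6p3:
  fixes xi :: "real \<times> real \<times> real \<times> real"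
  assumes "xi \<in> Phi" and "J2 xi < 1"
  shows "closure {p :: real \<times> real.
           filterlim (\<lambda>i. norm (bcnf_inv_iter xi i p)) at_top sequentially} = UNIV"
proof -
  obtain tL dL tR dR where xi: "xi = (tL, dL, tR, dR)" by (cases xi)
  obtain s mu r nu where eqs: "tL = s + mu" "dL = s * mu" "tR = - (r + nu)" "dR = r * nu"
    and "lamLs xi = s" "lamRs xi = - r" and "0 < s" "1 < mu" "0 < r" "1 < nu"
    using Phi_eigenvalues assms(1) unfolding xi by metis
  moreover have "lamLs xi + \<bar>lamRs xi\<bar> < 1"
    using lamLs_plus_abs_lamRs_le_J2 assms(2) by (rule le_less_trans)
  ultimately interpret bcnf_saddles s mu r nu by unfold_locales simp_all
  have "bcnf_inv_iter xi = (\<lambda>i. finv ^^ i)"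
    unfolding bcnf_inv_iter_def xi eqs inv_bcnf ..
  then show ?thesis using closure_finv_escaping_orbits by simp
qed

end
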